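(* Let $N=(G=(V,E),\sigma,u,s)$ be a skew-symmetric network and $f$ an IS-flow in $N$. Then $f$ has maximum value among all IS-flows in $N$ if and only if there is no r-augmenting path for $f$.
   Context: A skew-symmetric graph is a finite directed graph $G=(V,E)$ (parallel arcs allowed) with a map $\sigma$ of $V\cup E$ onto itself such that $\sigma(x)\ne x$, $\sigma(\sigma(x))=x$ for all $x$, $\sigma(V)=V$, and for each arc $a$ from $v$ to $w$, $\sigma(a)$ is an arc from $\sigma(w)$ to $\sigma(v)$; write $a'=\sigma(a)$. A function $h$ on $E$ is symmetric if $h(a)=h(\sigma(a))$. A skew-symmetric network is $N=(G,\sigma,u,s)$ with $u:E\to\mathbb Z_{\ge0}$ symmetric and source $s$; $s'=\sigma(s)$ is the sink. A flow is $f:E\to\mathbb R_{\ge0}$ with $f\le u$ and conservation ($\sum_{\text{out}}f-\sum_{\text{in}}f=0$) at every node other than $s,s'$; its value is $|f|=\sum_{\text{out of }s}f-\sum_{\text{into }s}f$. An IS-flow is an integer-valued symmetric flow. $G^+=(V,E^+)$ is obtained from $G$ by adding, for each arc $a=(x,y)\in E$, a reverse arc $a^R=(y,x)$; $\sigma$ extends by $\sigma(a^R)=(\sigma(a))^R$. The residual capacity is $u_f(a)=u(a)-f(a)$ for $a\in E$ and $u_f(a^R)=f(a)$. For a nonnegative integer symmetric function $h$ on the arcs of a skew-symmetric graph, a directed path $P$ is $h$-regular if $h(a)>0$ for every arc $a$ of $P$ and every arc $a$ of $P$ whose mate $a'$ also lies on $P$ satisfies $h(a)\ge2$. An r-augmenting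 path for $f$ is a $u_f$-regular path from $s$ to $s'$ in $G^+$. *)

theory Defs
  imports Complex_Main
begin

(* A finite directed multigraph: node set V, arc set E, each arc a goes from
   src a to trg a.  The skew symmetry sigma acts on nodes by sv and on arcs by se. *)

definition skew_symmetric_graph ::
  "'v set \<Rightarrow> 'e set \<Rightarrow> ('e \<Rightarrow> 'v) \<Rightarrow> ('e \<Rightarrow> 'v) \<Rightarrow> ('v \<Rightarrow> 'v) \<Rightarrow> ('e \<Rightarrow> 'e) \<Rightarrow> bool" where
  "skew_symmetric_graph V E src trg sv se \<longleftrightarrow>
     finite V \<and> finite E \<and>
     (\<forall>a\<in>E. src a \<in> V \<and> trg a \<in> V) \<and>
     sv ` V = V \<and> (\<forall>x\<in>V. sv x \<noteq> x \<and> sv (sv x) = x) \<and>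
     se ` E = E \<and> (\<forall>a\<in>E. se a \<noteq> a \<and> se (se a) = a) \<and>
     (\<forall>a\<in>E. src (se a) = sv (trg a) \<and> trg (se a) = sv (src a))"

definition symmetric_fun :: "'e set \<Rightarrow> ('e \<Rightarrow> 'e) \<Rightarrow> ('e \<Rightarrow> 'b) \<Rightarrow> bool" where
  "symmetric_fun E se h \<longleftrightarrow> (\<forall>a\<in>E. h (se a) = h a)"

definition skew_symmetric_network ::
  "'v set \<Rightarrow> 'e set \<Rightarrow> ('e \<Rightarrow> 'v) \<Rightarrow> ('e \<Rightarrow> 'v) \<Rightarrow> ('v \<Rightarrow> 'v) \<Rightarrow> ('e \<Rightarrow> 'e)
     \<Rightarrow> ('e \<Rightarrow> nat) \<Rightarrow> 'v \<Rightarrow> bool" where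
  "skew_symmetric_network V E src trg sv se u s \<longleftrightarrow>
     skew_symmetric_graph V E src trg sv se \<and> symmetric_fun E se u \<and> s \<in> V"

definition is_flow ::
  "'v set \<Rightarrow> 'e set \<Rightarrow> ('e \<Rightarrow> 'v) \<Rightarrow> ('e \<Rightarrow> 'v) \<Rightarrow> ('v \<Rightarrow> 'v)
     \<Rightarrow> ('e \<Rightarrow> nat) \<Rightarrow> 'v \<Rightarrow> ('e \<Rightarrow> real) \<Rightarrow> bool" where
  "is_flow V E src trg sv u s f \<longleftrightarrow>
     (\<forall>a\<in>E. 0 \<le> f a \<and> f a \<le> real (u a)) \<and>
     (\<forall>v\<in>V - {s, sv s}.
        (\<Sum>a\<in>{a\<in>E. src a = v}. f a) - (\<Sum>a\<in>{a\<in>E. trg a = v}. f a) = 0)"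

definition flow_value ::
  "'e set \<Rightarrow> ('e \<Rightarrow> 'v) \<Rightarrow> ('e \<Rightarrow> 'v) \<Rightarrow> 'v \<Rightarrow> ('e \<Rightarrow> real) \<Rightarrow> real" where
  "flow_value E src trg s f =
     (\<Sum>a\<in>{a\<in>E. src a = s}. f a) - (\<Sum>a\<in>{a\<in>E. trg a = s}. f a)"

definition is_IS_flow ::
  "'v set \<Rightarrow> 'e set \<Rightarrow> ('e \<Rightarrow> 'v) \<Rightarrow> ('e \<Rightarrow> 'v) \<Rightarrow> ('v \<Rightarrow> 'v) \<Rightarrow> ('e \<Rightarrow> 'e)
     \<Rightarrow> ('e \<Rightarrow> nat) \<Rightarrow> 'v \<Rightarrow> ('e \<Rightarrow> real) \<Rightarrow> bool" where
  "is_IS_flow V E src trg sv se u s f \<longleftrightarrow>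
     is_flow V E src trg sv u s f \<and> (\<forall>a\<in>E. f a \<in> \<int>) \<and> symmetric_fun E se f"

(* G^+: arcs (a, True) stand for a \<in> E, arcs (a, False) for the reverse arc a^R. *)
definition src_plus :: "('e \<Rightarrow> 'v) \<Rightarrow> ('e \<Rightarrow> 'v) \<Rightarrow> 'e \<times> bool \<Rightarrow> 'v" where
  "src_plus src trg p = (if snd p then src (fst p) else trg (fst p))"

definition trg_plus :: "('e \<Rightarrow> 'v) \<Rightarrow> ('e \<Rightarrow> 'v) \<Rightarrow> 'e \<times> bool \<Rightarrow> 'v" where
  "trg_plus src trg p = (if snd p then trg (fst p) else src (fst p))"

definition se_plus :: "('e \<Rightarrow> 'e) \<Rightarrow> 'e \<times> bool \<Rightarrow> 'e \<times> bool" where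
  "se_plus se p = (se (fst p), snd p)"

definition res_cap :: "('e \<Rightarrow> nat) \<Rightarrow> ('e \<Rightarrow> real) \<Rightarrow> 'e \<times> bool \<Rightarrow> real" where
  "res_cap u f p = (if snd p then real (u (fst p)) - f (fst p) else f (fst p))"

definition is_path_plus ::
  "'e set \<Rightarrow> ('e \<Rightarrow> 'v) \<Rightarrow> ('e \<Rightarrow> 'v) \<Rightarrow> ('e \<times> bool) list \<Rightarrow> 'v \<Rightarrow> 'v \<Rightarrow> bool" where
  "is_path_plus E src trg P x y \<longleftrightarrow>
     P \<noteq> [] \<and> set P \<subseteq> E \<times> UNIV \<and>
     src_plus src trg (hd P) = x \<and> trg_plus src trg (last P) = y \<and>
     (\<forall>i. Suc i < length P \<longrightarrow> trg_plus src trg (P ! i) = src_plus src trg (P ! Suc i)) \<and>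
     distinct (map (src_plus src trg) P @ [trg_plus src trg (last P)])"

definition regular_path ::
  "('e \<Rightarrow> 'e) \<Rightarrow> ('e \<times> bool \<Rightarrow> real) \<Rightarrow> ('e \<times> bool) list \<Rightarrow> bool" where
  "regular_path se h P \<longleftrightarrow>
     (\<forall>p\<in>set P. h p > 0) \<and>
     (\<forall>p\<in>set P. se_plus se p \<in> set P \<longrightarrow> h p \<ge> 2)"

definition r_augmenting_path ::
  "'e set \<Rightarrow> ('e \<Rightarrow> 'v) \<Rightarrow> ('e \<Rightarrow> 'v) \<Rightarrow> ('v \<Rightarrow> 'v) \<Rightarrow> ('e \<Rightarrow> 'e)
     \<Rightarrow> ('e \<Rightarrow> nat) \<Rightarrow> 'v \<Rightarrow> ('e \<Rightarrow> real) \<Rightarrow> ('e \<times> bool) list \<Rightarrow> bool" where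
  "r_augmenting_path E src trg sv se u s f P \<longleftrightarrow>
     is_path_plus E src trg P s (sv s) \<and> regular_path se (res_cap u f) P"

end

(* Augmenting f by one unit along an r-augmenting path P and by one unit along its mate path
   raises the value by 2; regularity keeps the result within the capacities.

   Conversely, let g be an IS-flow of larger value. The integer function g - f, split into
   forward and reverse residual arcs and with every arc of G^+ taken with its multiplicity,
   forms a skew-symmetric multigraph that is balanced except for an excess at s. At one node x
   of each mate pair {x, sv x} match the arcs entering x injectively to arcs leaving x, and
   mirror the matching at sv x. Following this transition rule from an unmatched arc leaving s
   gives a trail to sv s, and since the rule commutes with the skew symmetry, the trail never
   contains a copy of an arc together with its mate copy. Shortcutting the trail gives a path in
   G^+ on which mate arcs come from different copies and so have residual capacity at least 2:
   an r-augmenting path. *)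

theory Submission
  imports Defs
begin

section \<open>Net flow\<close>

definition net_flow :: "'e set \<Rightarrow> ('e \<Rightarrow> 'v) \<Rightarrow> ('e \<Rightarrow> 'v) \<Rightarrow> ('e \<Rightarrow> real) \<Rightarrow> 'v \<Rightarrow> real" where
  "net_flow E src trg \<phi> v = (\<Sum>a\<in>{a\<in>E. src a = v}. \<phi> a) - (\<Sum>a\<in>{a\<in>E. trg a = v}. \<phi> a)"

lemma flow_value_eq_net_flow: "flow_value E src trg s f = net_flow E src trg f s"
  by (simp add: flow_value_def net_flow_def)

lemma is_flow_iff_net_flow:
  "is_flow V E src trg sv u s f \<longleftrightarrow>
     (\<forall>a\<in>E. 0 \<le> f a \<and> f a \<le> real (u a)) \<and> (\<forall>v\<in>V - {s, sv s}. net_flow E src trg f v = 0)"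
  by (simp add: is_flow_def net_flow_def)

lemma net_flow_cong:
  "(\<And>a. a \<in> E \<Longrightarrow> \<phi> a = \<psi> a) \<Longrightarrow> net_flow E src trg \<phi> v = net_flow E src trg \<psi> v"
  by (simp add: net_flow_def)

lemma net_flow_add:
  "net_flow E src trg (\<lambda>a. \<phi> a + \<psi> a) v = net_flow E src trg \<phi> v + net_flow E src trg \<psi> v"
  by (simp add: net_flow_def sum.distrib)

lemma net_flow_diff:
  "net_flow E src trg (\<lambda>a. \<phi> a - \<psi> a) v = net_flow E src trg \<phi> v - net_flow E src trg \<psi> v"
  by (simp add: net_flow_def sum_subtractf)

lemma net_flow_compose_mate:
  assumes "skew_symmetric_graph V E src trg sv se" and "v \<in> V"
  shows "net_flow E src trg (\<lambda>a. \<phi> (se a)) v = - net_flow E src trg \<phi> (sv v)"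
proof -
  have se: "\<And>a. a \<in> E \<Longrightarrow> se a \<in> E \<and> se (se a) = a
      \<and> src (se a) = sv (trg a) \<and> trg (se a) = sv (src a)"
    and sv: "\<And>x. x \<in> V \<Longrightarrow> sv (sv x) = x"
    and EV: "\<And>a. a \<in> E \<Longrightarrow> src a \<in> V \<and> trg a \<in> V"
    using assms(1) unfolding skew_symmetric_graph_def by blast+
  have out: "(\<Sum>a\<in>{a\<in>E. src a = v}. \<phi> (se a)) = (\<Sum>b\<in>{b\<in>E. trg b = sv v}. \<phi> b)"
    by (rule sum.reindex_bij_witness[where i = se and j = se]) (auto simp: se sv EV assms(2))
  have "(\<Sum>a\<in>{a\<in>E. trg a = v}. \<phi> (se a)) = (\<Sum>b\<in>{b\<in>E. src b = sv v}. \<phi> b)"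
    by (rule sum.reindex_bij_witness[where i = se and j = se]) (auto simp: se sv EV assms(2))
  with out show ?thesis
    by (simp add: net_flow_def)
qed

lemma net_flow_plus:
  assumes "finite E"
  shows "net_flow (E \<times> UNIV) (src_plus src trg) (trg_plus src trg) h v
       = net_flow E src trg (\<lambda>a. h (a, True) - h (a, False)) v"
proof -
  have split: "(\<Sum>p\<in>{p\<in>E \<times> UNIV. x p = v}. h p)
      = (\<Sum>a\<in>{a\<in>E. x (a, True) = v}. h (a, True)) + (\<Sum>a\<in>{a\<in>E. x (a, False) = v}. h (a, False))"
    for x
  proof -
    have "(\<Sum>p\<in>{p\<in>E \<times> UNIV. x p = v}. h p) = (\<Sum>a\<in>E. \<Sum>b\<in>UNIV. if x (a, b) = v then h (a, b) else 0)"
      using assms by (simp add: sum.inter_filter sum.cartesian_product)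
    also have "\<dots> = (\<Sum>a\<in>E. (if x (a, True) = v then h (a, True) else 0))
        + (\<Sum>a\<in>E. (if x (a, False) = v then h (a, False) else 0))"
      by (simp add: UNIV_bool sum.distrib add.commute)
    finally show ?thesis
      using assms by (simp add: sum.inter_filter)
  qed
  show ?thesis
    unfolding net_flow_def split by (simp add: src_plus_def trg_plus_def sum_subtractf)
qed

section \<open>Walks in the extended graph\<close>

fun walk :: "('p \<Rightarrow> 'v) \<Rightarrow> ('p \<Rightarrow> 'v) \<Rightarrow> 'v \<Rightarrow> 'p list \<Rightarrow> 'v \<Rightarrow> bool" where
  "walk sp tp x [] y \<longleftrightarrow> x = y"
| "walk sp tp x (p # P) y \<longleftrightarrow> sp p = x \<and> walk sp tp (tp p) P y"

lemma walk_append [simp]: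
  "walk sp tp x (P @ Q) y \<longleftrightarrow> (\<exists>m. walk sp tp x P m \<and> walk sp tp m Q y)"
  by (induction P arbitrary: x) auto

lemma walk_end_in_nodes: "walk sp tp x P y \<Longrightarrow> y \<in> set (x # map tp P)"
  by (induction P arbitrary: x) auto

lemma walk_iff_successively:
  "P \<noteq> [] \<Longrightarrow> walk sp tp x P y \<longleftrightarrow>
     sp (hd P) = x \<and> tp (last P) = y \<and> successively (\<lambda>p q. tp p = sp q) P"
proof (induction P arbitrary: x)
  case (Cons p Q)
  show ?case
  proof (cases "Q = []")
    case False
    have "walk sp tp x (p # Q) y \<longleftrightarrow> sp p = x \<and> walk sp tp (tp p) Q y"
      by simp
    also have "\<dots> \<longleftrightarrow> sp p = x \<and> sp (hd Q) = tp p \<and> tp (last Q) = y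
        \<and> successively (\<lambda>p q. tp p = sp q) Q"
      using Cons.IH[OF False] by blast
    finally show ?thesis
      using False by (auto simp: successively_Cons)
  qed simp
qed simp

lemma walk_nodes:
  "walk sp tp x P y \<Longrightarrow> P \<noteq> [] \<Longrightarrow> map sp P @ [tp (last P)] = x # map tp P"
  by (induction P arbitrary: x) auto

lemma successively_iff_nth:
  "successively R xs \<longleftrightarrow> (\<forall>i. Suc i < length xs \<longrightarrow> R (xs ! i) (xs ! Suc i))"
proof (induction xs rule: induct_list012)
  case (3 x y zs)
  then show ?case
    by (auto simp: nth_Cons split: nat.split)
qed simp_all

lemma is_path_plus_iff_walk:
  "is_path_plus E src trg P x y \<longleftrightarrow>
     P \<noteq> [] \<and> set P \<subseteq> E \<times> UNIV \<and> walk (src_plus src trg) (trg_plus src trg) x P y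
     \<and> distinct (x # map (trg_plus src trg) P)"
proof (cases "P = []")
  case False
  have "is_path_plus E src trg P x y \<longleftrightarrow> set P \<subseteq> E \<times> UNIV
      \<and> walk (src_plus src trg) (trg_plus src trg) x P y
      \<and> distinct (map (src_plus src trg) P @ [trg_plus src trg (last P)])"
    using False by (auto simp: is_path_plus_def walk_iff_successively successively_iff_nth)
  with walk_nodes[OF _ False] False show ?thesis
    by (metis (no_types, lifting))
qed (simp add: is_path_plus_def)

lemma walk_split_at_node:
  assumes "walk sp tp z P y" and "x \<in> set (z # map tp P)"
  shows "\<exists>R Q. P = R @ Q \<and> walk sp tp z R x \<and> walk sp tp x Q y"
  using assms
proof (induction P arbitrary: z)
  case (Cons p P)
  show ?case
  proof (cases "x = z")
    case True
    with Cons.prems(1) show ?thesis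
      by (intro exI[of _ "[]"] exI[of _ "p # P"]) simp
  next
    case False
    from Cons.prems have "sp p = z" "walk sp tp (tp p) P y"
      by simp_all
    moreover from False Cons.prems(2) have "x \<in> set (tp p # map tp P)"
      by simp
    ultimately obtain R Q where "P = R @ Q" "walk sp tp (tp p) R x" "walk sp tp x Q y"
      using Cons.IH by blast
    with \<open>sp p = z\<close> show ?thesis
      by (intro exI[of _ "p # R"] exI[of _ Q]) auto
  qed
qed simp

lemma walk_shortcut:
  assumes "walk sp tp x W y"
  shows "\<exists>P. walk sp tp x P y \<and> set P \<subseteq> set W \<and> distinct (x # map tp P)"
  using assms
proof (induction W arbitrary: x)
  case (Cons q W)
  then have "sp q = x" "walk sp tp (tp q) W y"
    by simp_all
  then obtain P where P: "walk sp tp (tp q) P y" "set P \<subseteq> set W" "distinct (tp q # map tp P)"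
    using Cons.IH by blast
  show ?case
  proof (cases "x \<in> set (tp q # map tp P)")
    case True
    then obtain R Q where RQ: "P = R @ Q" "walk sp tp (tp q) R x" "walk sp tp x Q y"
      using walk_split_at_node[OF P(1)] by blast
    have "x \<in> set (tp q # map tp R)"
      using walk_end_in_nodes[OF RQ(2)] .
    moreover have "distinct ((tp q # map tp R) @ map tp Q)"
      using P(3) RQ(1) by simp
    ultimately have "distinct (x # map tp Q)"
      unfolding distinct_append by (metis disjoint_iff distinct.simps(2))
    with RQ P(2) show ?thesis by auto
  next
    case False
    with \<open>sp q = x\<close> P show ?thesis
      by (intro exI[of _ "q # P"]) auto
  qed
qed simp

lemma count_list_filter: "count_list (filter Q P) p = (if Q p then count_list P p else 0)"
  by (induction P) auto

lemma sum_count_list_filter: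
  assumes "finite F" and "set P \<subseteq> F"
  shows "(\<Sum>p\<in>{p\<in>F. Q p}. count_list P p) = length (filter Q P)"
proof -
  have "(\<Sum>p\<in>{p\<in>F. Q p}. count_list P p) = (\<Sum>p\<in>F. count_list (filter Q P) p)"
    using assms(1) by (simp add: sum.inter_filter count_list_filter)
  also have "\<dots> = length (filter Q P)"
    using assms by (intro sum_count_set) auto
  finally show ?thesis .
qed

lemma walk_net_flow:
  assumes "finite F" and "set P \<subseteq> F" and "walk sp tp x P y"
  shows "net_flow F sp tp (\<lambda>p. real (count_list P p)) v = of_bool (v = x) - of_bool (v = y)"
proof -
  have "real (length (filter (\<lambda>p. sp p = v) P)) - real (length (filter (\<lambda>p. tp p = v) P))
      = of_bool (v = x) - of_bool (v = y)"
    using assms(3)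
  proof (induction P arbitrary: x)
    case (Cons p P)
    then have "real (length (filter (\<lambda>p. sp p = v) P)) - real (length (filter (\<lambda>p. tp p = v) P))
        = of_bool (v = tp p) - of_bool (v = y)" and "sp p = x"
      by auto
    then show ?case
      by (auto simp: of_bool_def split: if_splits)
  qed simp
  then show ?thesis
    using sum_count_list_filter[OF assms(1,2)] by (simp add: net_flow_def flip: of_nat_sum)
qed

section \<open>Mate-free trails in skew-symmetric multigraphs\<close>

lemma successively_distinct:
  assumes "successively R cs"
    and left_unique: "\<And>a b c. R a c \<Longrightarrow> R b c \<Longrightarrow> a = b"
    and "\<And>a. \<not> R a (hd cs)"
  shows "distinct cs"
  using assms(1,3)
proof (induction cs rule: rev_induct)
  case (snoc b cs)
  show ?case
  proof (cases "cs = []")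
    case False
    then have "successively R cs" "R (last cs) b" "\<And>a. \<not> R a (hd cs)"
      using snoc.prems by (auto simp: successively_append_iff)
    then have dist: "distinct cs"
      using snoc.IH by blast
    have "b \<notin> set cs"
    proof
      assume "b \<in> set cs"
      then obtain p q where cs: "cs = p @ b # q"
        by (meson split_list)
      show False
      proof (cases "p = []")
        case True
        then show False
          using \<open>R (last cs) b\<close> \<open>\<And>a. \<not> R a (hd cs)\<close> cs by simp
      next
        case False
        then have "R (last p) b"
          using \<open>successively R cs\<close> cs by (simp add: successively_append_iff)
        then have "last p = last (b # q)"
          using left_unique \<open>R (last cs) b\<close> cs by simp
        moreover have "last p \<in> set p"
          using False by simp
        ultimately show False
          using dist cs by (cases "q = []") (auto simp: disjoint_iff)
      qed
    qed
    with dist show ?thesis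
      by simp
  qed simp
qed simp

lemma successively_maximal_exists:
  assumes "finite T" and "t0 \<in> T"
    and closed: "\<And>a b. R a b \<Longrightarrow> b \<in> T"
    and left_unique: "\<And>a b c. R a c \<Longrightarrow> R b c \<Longrightarrow> a = b"
    and "\<And>a. \<not> R a t0"
  shows "\<exists>cs. cs \<noteq> [] \<and> hd cs = t0 \<and> set cs \<subseteq> T \<and> successively R cs \<and> (\<forall>b. \<not> R (last cs) b)"
proof -
  define C where "C cs \<longleftrightarrow> cs \<noteq> [] \<and> hd cs = t0 \<and> set cs \<subseteq> T \<and> successively R cs" for cs
  have "length cs < Suc (card T)" if "C cs" for cs
  proof -
    have "distinct cs"
    proof (rule successively_distinct)
      show "successively R cs" "\<And>a. \<not> R a (hd cs)"
        using that assms(5) unfolding C_def by auto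
    qed (fact left_unique)
    then have "length cs = card (set cs)"
      by (simp add: distinct_card)
    also have "\<dots> \<le> card T"
      using that assms(1) unfolding C_def by (simp add: card_mono)
    finally show ?thesis
      by simp
  qed
  moreover have "C [t0]"
    using assms(2) unfolding C_def by simp
  ultimately obtain cs where cs: "C cs" and longest: "\<And>ds. C ds \<Longrightarrow> length ds \<le> length cs"
    using Lattices_Big.ex_has_greatest_nat[of C "[t0]" length "Suc (card T)"] by blast
  have "\<not> R (last cs) b" for b
  proof
    assume "R (last cs) b"
    then have "C (cs @ [b])"
      using cs closed unfolding C_def by (auto simp: successively_append_iff)
    with longest show False
      by fastforce
  qed
  with cs show ?thesis
    unfolding C_def by blast
qed

lemma segment_between:
  assumes "x \<in> set xs" and "y \<in> set xs"
  shows "\<exists>p q r. xs = p @ q @ r \<and> q \<noteq> [] \<and> {hd q, last q} = {x, y}"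
proof -
  obtain p r where xs: "xs = p @ x # r"
    using assms(1) by (meson split_list)
  consider "y = x" | "y \<in> set r" | "y \<in> set p"
    using assms(2) xs by auto
  then show ?thesis
  proof cases
    case 1
    with xs show ?thesis
      by (intro exI[of _ p] exI[of _ "[x]"] exI[of _ r]) auto
  next
    case 2
    then obtain r1 r2 where "r = r1 @ y # r2"
      by (meson split_list)
    with xs show ?thesis
      by (intro exI[of _ p] exI[of _ "x # r1 @ [y]"] exI[of _ r2]) auto
  next
    case 3
    then obtain p1 p2 where "p = p1 @ y # p2"
      by (meson split_list)
    with xs show ?thesis
      by (intro exI[of _ p1] exI[of _ "y # p2 @ [x]"] exI[of _ r]) auto
  qed
qed

lemma involution_transversal:
  assumes "\<And>x. x \<in> V \<Longrightarrow> sv x \<in> V \<and> sv (sv x) = x \<and> sv x \<noteq> x" and "s \<in> V"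
  shows "\<exists>R \<subseteq> V. s \<in> R \<and> (\<forall>x\<in>V. x \<in> R \<longleftrightarrow> sv x \<notin> R)"
proof -
  define R where "R = {x\<in>V. x = s \<or> (x \<noteq> sv s \<and> x = (SOME y. y \<in> {x, sv x}))}"
  have "x \<in> R \<longleftrightarrow> sv x \<notin> R" if "x \<in> V" for x
  proof (cases "x = s \<or> x = sv s")
    case True
    then show ?thesis
      using assms that unfolding R_def by auto
  next
    case False
    define c where "c = (SOME y. y \<in> {x, sv x})"
    have "c \<in> {x, sv x}"
      unfolding c_def by (rule someI[of _ x]) simp
    have x: "sv x \<in> V" "sv (sv x) = x" "sv x \<noteq> x"
      using assms(1)[OF that] by auto
    have "sv (sv s) = s"
      using assms by blast
    then have "sv x \<noteq> s" "sv x \<noteq> sv s"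
      using False x(2) by metis+
    moreover have "(SOME y. y \<in> {sv x, sv (sv x)}) = c"
      using x(2) unfolding c_def by (simp add: insert_commute)
    ultimately have "sv x \<in> R \<longleftrightarrow> sv x = c"
      using x(1) unfolding R_def by simp
    moreover have "x \<in> R \<longleftrightarrow> x = c"
      using False that unfolding R_def c_def by simp
    ultimately show ?thesis
      using \<open>c \<in> {x, sv x}\<close> x(3) by auto
  qed
  moreover have "R \<subseteq> V" "s \<in> R"
    using assms(2) unfolding R_def by auto
  ultimately show ?thesis
    by blast
qed

lemma inj_into_if_card_le:
  assumes "finite A" and "finite B" and "card A \<le> card B"
  shows "\<exists>\<phi>. inj_on \<phi> A \<and> \<phi> ` A \<subseteq> B \<and> (card A = card B \<longrightarrow> \<phi> ` A = B)"
proof -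
  obtain \<phi> where "\<phi> ` A \<subseteq> B" "inj_on \<phi> A"
    using card_le_inj[OF assms] by blast
  moreover have "\<phi> ` A = B" if "card A = card B"
    using card_subset_eq[OF assms(2) \<open>\<phi> ` A \<subseteq> B\<close>] card_image[OF \<open>inj_on \<phi> A\<close>] that by simp
  ultimately show ?thesis
    by blast
qed

(* The arc-level skew symmetry on an abstract arc set, so that parallel copies of one arc are
   distinct elements. *)
locale skew_multigraph =
  fixes T :: "'t set" and tail head :: "'t \<Rightarrow> 'v" and mate :: "'t \<Rightarrow> 't"
    and V :: "'v set" and sv :: "'v \<Rightarrow> 'v"
  assumes finite_arcs: "finite T"
    and mate_arc: "t \<in> T \<Longrightarrow> mate t \<in> T"
    and mate_mate: "t \<in> T \<Longrightarrow> mate (mate t) = t"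
    and mate_neq: "t \<in> T \<Longrightarrow> mate t \<noteq> t"
    and tail_mate: "t \<in> T \<Longrightarrow> tail (mate t) = sv (head t)"
    and head_mate: "t \<in> T \<Longrightarrow> head (mate t) = sv (tail t)"
    and tail_node: "t \<in> T \<Longrightarrow> tail t \<in> V"
    and head_node: "t \<in> T \<Longrightarrow> head t \<in> V"
    and sv_node: "x \<in> V \<Longrightarrow> sv x \<in> V"
    and sv_sv: "x \<in> V \<Longrightarrow> sv (sv x) = x"
    and sv_neq: "x \<in> V \<Longrightarrow> sv x \<noteq> x"
begin

definition arcs_in :: "'v \<Rightarrow> 't set" where
  "arcs_in x = {t\<in>T. head t = x}"

definition arcs_out :: "'v \<Rightarrow> 't set" where
  "arcs_out x = {t\<in>T. tail t = x}"

lemma finite_arcs_in_out: "finite (arcs_in x)" "finite (arcs_out x)"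
  using finite_arcs by (simp_all add: arcs_in_def arcs_out_def)

context
  fixes step :: "'t \<Rightarrow> 't \<Rightarrow> bool"
  assumes link: "\<And>a b. step a b \<Longrightarrow> head a = tail b"
    and reverse: "\<And>a b. step a b \<Longrightarrow> step (mate b) (mate a)"
    and right_unique: "\<And>a b c. step a b \<Longrightarrow> step a c \<Longrightarrow> b = c"
begin

(* A mate pair at the two ends of a trail moves one step inward at both ends; it can never
   become adjacent, since t followed by mate t would give sv (head t) = head t. *)
lemma successively_hd_neq_mate_last:
  "successively step cs \<Longrightarrow> set cs \<subseteq> T \<Longrightarrow> cs \<noteq> [] \<Longrightarrow> hd cs \<noteq> mate (last cs)"
proof (induction cs rule: length_induct)
  case (1 cs)
  then obtain a ys where cs: "cs = a # ys"
    by (cases cs) auto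
  show ?case
  proof (cases ys rule: rev_cases)
    case Nil
    with "1.prems"(2) cs show ?thesis
      using mate_neq by fastforce
  next
    case (snoc m b)
    have ab: "a \<in> T" "b \<in> T"
      using "1.prems"(2) cs snoc by auto
    show ?thesis
    proof (cases "m = []")
      case True
      with snoc cs "1.prems"(1) have "head a = tail b"
        using link by simp
      moreover have "head a \<in> V"
        using head_node ab by blast
      ultimately show ?thesis
        using cs snoc True tail_mate[OF ab(1)] sv_neq mate_mate[OF ab(2)] by force
    next
      case False
      have "step a (hd m)" "step (last m) b" "successively step m"
        using "1.prems"(1) cs snoc False
        by (auto simp: successively_append_iff successively_Cons)
      moreover have "set m \<subseteq> T"
        using "1.prems"(2) cs snoc by auto
      moreover have "length m < length cs"
        using cs snoc by simp
      ultimately have "hd m \<noteq> mate (last m)"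
        using "1.IH" False by blast
      moreover have "step (mate b) (mate (last m))"
        using reverse[OF \<open>step (last m) b\<close>] .
      ultimately show ?thesis
        using right_unique[OF \<open>step a (hd m)\<close>] cs snoc by auto
    qed
  qed
qed

lemma successively_mate_free:
  assumes "successively step cs" and "set cs \<subseteq> T" and "x \<in> set cs" and "y \<in> set cs"
  shows "x \<noteq> mate y"
proof -
  obtain p q r where cs: "cs = p @ q @ r" and "q \<noteq> []" and ends: "{hd q, last q} = {x, y}"
    using segment_between[OF assms(3,4)] by blast
  have "successively step q" "set q \<subseteq> T"
    using assms(1,2) cs by (auto simp: successively_append_iff)
  then have "hd q \<noteq> mate (last q)"
    using successively_hd_neq_mate_last \<open>q \<noteq> []\<close> by blast
  moreover have "x \<in> T" "y \<in> T"
    using assms by auto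
  ultimately show ?thesis
    using ends mate_mate by (auto simp: doubleton_eq_iff)
qed

end

end

locale skew_transition_system = skew_multigraph T tail head mate V sv
  for T :: "'t set" and tail head :: "'t \<Rightarrow> 'v" and mate V sv +
  fixes s :: 'v and R :: "'v set" and \<Phi> :: "'v \<Rightarrow> 't \<Rightarrow> 't"
  assumes source_in_R: "s \<in> R"
    and transversal: "x \<in> V \<Longrightarrow> x \<in> R \<longleftrightarrow> sv x \<notin> R"
    and matching_inj: "x \<in> R \<Longrightarrow> inj_on (\<Phi> x) (arcs_in x)"
    and matching_into: "x \<in> R \<Longrightarrow> \<Phi> x ` arcs_in x \<subseteq> arcs_out x"
    and matching_onto: "x \<in> R \<Longrightarrow> x \<noteq> s \<Longrightarrow> \<Phi> x ` arcs_in x = arcs_out x"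
    and source_excess: "card (arcs_in s) < card (arcs_out s)"
begin

(* At a node x of R the successor of an arc entering x is chosen by the matching \<Phi> x; at the
   mate node sv x the rule is the mirror image, which makes follows_mate hold. *)
definition follows :: "'t \<Rightarrow> 't \<Rightarrow> bool" where
  "follows t t' \<longleftrightarrow> t \<in> T \<and> t' \<in> T \<and>
     (if head t \<in> R then t' = \<Phi> (head t) t
      else mate t' \<in> arcs_in (sv (head t)) \<and> \<Phi> (sv (head t)) (mate t') = mate t)"

lemma follows_arcs: "follows t t' \<Longrightarrow> t \<in> T \<and> t' \<in> T"
  by (simp add: follows_def)

lemma follows_link:
  assumes "follows t t'"
  shows "head t = tail t'"
proof (cases "head t \<in> R")
  case True
  then have "t' \<in> \<Phi> (head t) ` arcs_in (head t)"
    using assms by (auto simp: follows_def arcs_in_def)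
  then show ?thesis
    using matching_into[OF True] by (auto simp: arcs_out_def)
next
  case False
  then have "sv (tail t') = sv (head t)" "t \<in> T" "t' \<in> T"
    using assms head_mate by (auto simp: follows_def arcs_in_def)
  then show ?thesis
    using sv_sv head_node tail_node by metis
qed

lemma follows_left_unique:
  assumes "follows t t'" and "follows t'' t'"
  shows "t = t''"
proof -
  have x: "head t'' = head t"
    using follows_link assms by metis
  have T: "t \<in> T" "t'' \<in> T"
    using assms follows_arcs by blast+
  show ?thesis
  proof (cases "head t \<in> R")
    case True
    with assms x have "\<Phi> (head t) t = \<Phi> (head t) t''"
      by (simp add: follows_def)
    with matching_inj[OF True] T x show ?thesis
      by (auto simp: inj_on_def arcs_in_def)
  next
    case False
    with assms x have "mate t = mate t''"
      by (simp add: follows_def)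
    with T show ?thesis
      using mate_mate by metis
  qed
qed

lemma follows_mate:
  assumes "follows t t'"
  shows "follows (mate t') (mate t)"
proof -
  have T: "t \<in> T" "t' \<in> T"
    using assms follows_arcs by blast+
  have x: "head (mate t') = sv (head t)" "head t \<in> V"
    using head_mate[OF T(2)] follows_link[OF assms] head_node[OF T(1)] by simp_all
  show ?thesis
  proof (cases "head t \<in> R")
    case True
    then have "sv (head t) \<notin> R"
      using transversal x(2) by blast
    with True assms T x show ?thesis
      by (simp add: follows_def mate_arc mate_mate sv_sv arcs_in_def)
  next
    case False
    then have "sv (head t) \<in> R"
      using transversal x(2) by blast
    with False assms T x show ?thesis
      by (simp add: follows_def mate_arc)
  qed
qed

lemma follows_right_unique: "follows t t' \<Longrightarrow> follows t t'' \<Longrightarrow> t' = t''"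
  using follows_left_unique follows_mate follows_arcs mate_mate by metis

lemma follows_exists:
  assumes "t \<in> T" and "head t \<noteq> sv s"
  shows "\<exists>t'. follows t t'"
proof (cases "head t \<in> R")
  case True
  then have "\<Phi> (head t) t \<in> T"
    using assms(1) matching_into by (auto simp: arcs_in_def arcs_out_def)
  with True assms(1) show ?thesis
    by (auto simp: follows_def)
next
  case False
  define x where "x = sv (head t)"
  have "head t \<in> V"
    using head_node assms(1) by blast
  then have "x \<in> R" "x \<noteq> s"
    using False transversal assms(2) sv_sv unfolding x_def by metis+
  moreover have "mate t \<in> arcs_out x"
    using assms(1) tail_mate mate_arc unfolding x_def arcs_out_def by simp
  ultimately obtain r where r: "r \<in> arcs_in x" "\<Phi> x r = mate t"
    using matching_onto by (metis imageE)
  then have "follows t (mate r)"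
    using False assms(1) mate_arc mate_mate unfolding follows_def x_def arcs_in_def by auto
  then show ?thesis ..
qed

lemma source_arc_exists: "\<exists>t0\<in>T. tail t0 = s \<and> (\<forall>t. \<not> follows t t0)"
proof -
  have "card (\<Phi> s ` arcs_in s) < card (arcs_out s)"
    using card_image_le[OF finite_arcs_in_out(1)] source_excess by (meson le_less_trans)
  then obtain t0 where t0: "t0 \<in> arcs_out s" "t0 \<notin> \<Phi> s ` arcs_in s"
    by (metis subsetI subset_antisym less_irrefl matching_into[OF source_in_R])
  have "\<not> follows t t0" for t
  proof
    assume "follows t t0"
    then have "head t = s" "t \<in> T"
      using follows_link follows_arcs t0(1) unfolding arcs_out_def by fastforce+
    with \<open>follows t t0\<close> t0(2) source_in_R show False
      by (auto simp: follows_def arcs_in_def)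
  qed
  with t0(1) show ?thesis
    unfolding arcs_out_def by blast
qed

end

context skew_multigraph
begin

lemma exists_skew_transition_system:
  assumes "s \<in> V"
    and balanced: "\<And>x. x \<in> V \<Longrightarrow> x \<noteq> s \<Longrightarrow> x \<noteq> sv s \<Longrightarrow> card (arcs_in x) = card (arcs_out x)"
    and excess: "card (arcs_in s) < card (arcs_out s)"
  shows "\<exists>R \<Phi>. skew_transition_system T tail head mate V sv s R \<Phi>"
proof -
  obtain R where "R \<subseteq> V" "s \<in> R" and transversal: "\<forall>x\<in>V. x \<in> R \<longleftrightarrow> sv x \<notin> R"
    using involution_transversal[of V sv s] sv_node sv_sv sv_neq assms(1) by blast
  have "\<exists>\<phi>. inj_on \<phi> (arcs_in x) \<and> \<phi> ` arcs_in x \<subseteq> arcs_out x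
      \<and> (x \<noteq> s \<longrightarrow> \<phi> ` arcs_in x = arcs_out x)" if "x \<in> R" for x
  proof -
    have "x \<in> V" "x \<noteq> sv s"
      using that \<open>R \<subseteq> V\<close> \<open>s \<in> R\<close> transversal assms(1) by auto
    then have eq: "x \<noteq> s \<Longrightarrow> card (arcs_in x) = card (arcs_out x)"
      using balanced by blast
    then have "card (arcs_in x) \<le> card (arcs_out x)"
      using excess by (cases "x = s") auto
    then obtain \<phi> where "inj_on \<phi> (arcs_in x)" "\<phi> ` arcs_in x \<subseteq> arcs_out x"
        "card (arcs_in x) = card (arcs_out x) \<Longrightarrow> \<phi> ` arcs_in x = arcs_out x"
      using inj_into_if_card_le[OF finite_arcs_in_out] by blast
    with eq show ?thesis
      by blast
  qed
  then obtain \<Phi> where "\<forall>x\<in>R. inj_on (\<Phi> x) (arcs_in x) \<and> \<Phi> x ` arcs_in x \<subseteq> arcs_out x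
      \<and> (x \<noteq> s \<longrightarrow> \<Phi> x ` arcs_in x = arcs_out x)"
    by metis
  then have "skew_transition_system T tail head mate V sv s R \<Phi>"
    using \<open>s \<in> R\<close> transversal excess by unfold_locales auto
  then show ?thesis
    by blast
qed

theorem mate_free_trail:
  assumes "s \<in> V"
    and "\<And>x. x \<in> V \<Longrightarrow> x \<noteq> s \<Longrightarrow> x \<noteq> sv s \<Longrightarrow> card (arcs_in x) = card (arcs_out x)"
    and "card (arcs_in s) < card (arcs_out s)"
  shows "\<exists>cs. cs \<noteq> [] \<and> set cs \<subseteq> T \<and> tail (hd cs) = s \<and> head (last cs) = sv s
     \<and> successively (\<lambda>t t'. head t = tail t') cs \<and> (\<forall>t\<in>set cs. \<forall>t'\<in>set cs. t \<noteq> mate t')"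
proof -
  obtain R \<Phi> where "skew_transition_system T tail head mate V sv s R \<Phi>"
    using exists_skew_transition_system[OF assms] by blast
  then interpret skew_transition_system T tail head mate V sv s R \<Phi> .
  obtain t0 where "t0 \<in> T" "tail t0 = s" "\<And>t. \<not> follows t t0"
    using source_arc_exists by blast
  then obtain cs where cs: "cs \<noteq> []" "hd cs = t0" "set cs \<subseteq> T" "successively follows cs"
      and maximal: "\<And>t. \<not> follows (last cs) t"
    using successively_maximal_exists[OF finite_arcs, of t0 follows] follows_arcs follows_left_unique
    by blast
  have "head (last cs) = sv s"
    using maximal follows_exists cs(1,3) by (meson last_in_set subsetD)
  moreover have "successively (\<lambda>t t'. head t = tail t') cs"
    using cs(4) follows_link by (rule successively_mono)
  moreover have "t \<noteq> mate t'" if "t \<in> set cs" "t' \<in> set cs" for t t'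
  proof (rule successively_mate_free[where step = follows])
    show "\<And>a b. follows a b \<Longrightarrow> head a = tail b"
      by (fact follows_link)
    show "\<And>a b. follows a b \<Longrightarrow> follows (mate b) (mate a)"
      by (fact follows_mate)
    show "\<And>a b c. follows a b \<Longrightarrow> follows a c \<Longrightarrow> b = c"
      by (fact follows_right_unique)
  qed (use cs that in auto)
  ultimately show ?thesis
    using cs \<open>tail t0 = s\<close> by blast
qed

end

section \<open>Augmenting along a regular path\<close>

lemma count_list_distinct: "distinct P \<Longrightarrow> count_list P p = of_bool (p \<in> set P)"
  by (induction P) auto

lemma regular_path_mono:
  assumes "regular_path se h P" and "\<And>p. p \<in> set P \<Longrightarrow> h p \<le> h' p"
  shows "regular_path se h' P"
  using assms unfolding regular_path_def by (meson less_le_trans order_trans)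

lemma regular_path_mate_count:
  assumes "regular_path se h P" and "h p \<in> \<int>" and "0 \<le> h p" and "h (se_plus se p) = h p"
  shows "of_bool (p \<in> set P) + of_bool (se_plus se p \<in> set P) \<le> h p"
proof -
  have "1 \<le> h p" if "0 < h p"
    using Ints_nonzero_abs_ge1[OF assms(2)] that by simp
  then show ?thesis
    using assms unfolding regular_path_def by (cases "p \<in> set P"; cases "se_plus se p \<in> set P") auto
qed

lemma res_cap_IS_flow:
  assumes "skew_symmetric_network V E src trg sv se u s" and "is_IS_flow V E src trg sv se u s f"
    and "a \<in> E"
  shows "res_cap u f (a, b) \<in> \<int>" and "0 \<le> res_cap u f (a, b)"
    and "res_cap u f (se_plus se (a, b)) = res_cap u f (a, b)"
  using assms by (auto simp: skew_symmetric_network_def symmetric_fun_def is_IS_flow_def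
      is_flow_def res_cap_def se_plus_def)

definition path_flow :: "('e \<times> bool) list \<Rightarrow> 'e \<Rightarrow> real" where
  "path_flow P a = real (count_list P (a, True)) - real (count_list P (a, False))"

(* One unit along P and one unit along its mate path. *)
definition augment :: "('e \<Rightarrow> 'e) \<Rightarrow> ('e \<times> bool) list \<Rightarrow> ('e \<Rightarrow> real) \<Rightarrow> 'e \<Rightarrow> real" where
  "augment se P f a = f a + path_flow P a + path_flow P (se a)"

lemma net_flow_path_flow:
  assumes "finite E" and "set P \<subseteq> E \<times> UNIV"
    and "walk (src_plus src trg) (trg_plus src trg) x P y"
  shows "net_flow E src trg (path_flow P) v = of_bool (v = x) - of_bool (v = y)"
proof -
  have "net_flow E src trg (path_flow P) v
      = net_flow (E \<times> UNIV) (src_plus src trg) (trg_plus src trg) (\<lambda>p. real (count_list P p)) v"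
    by (simp add: net_flow_plus[OF assms(1)] path_flow_def[abs_def])
  also have "\<dots> = of_bool (v = x) - of_bool (v = y)"
    using assms(1) by (intro walk_net_flow assms(2,3)) simp
  finally show ?thesis .
qed

lemma net_flow_augment:
  assumes "skew_symmetric_graph V E src trg sv se" and "s \<in> V" and "v \<in> V"
    and "set P \<subseteq> E \<times> UNIV" and "walk (src_plus src trg) (trg_plus src trg) s P (sv s)"
  shows "net_flow E src trg (augment se P f) v
       = net_flow E src trg f v + 2 * (of_bool (v = s) - of_bool (v = sv s))"
proof -
  have "finite E" and sv: "sv (sv s) = s" "sv (sv v) = v" "sv s \<noteq> s"
    using assms(1-3) unfolding skew_symmetric_graph_def by auto
  have "net_flow E src trg (augment se P f) v = net_flow E src trg f v
      + net_flow E src trg (path_flow P) v - net_flow E src trg (path_flow P) (sv v)"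
    unfolding augment_def net_flow_add net_flow_compose_mate[OF assms(1,3)] by simp
  also have "\<dots> = net_flow E src trg f v + 2 * (of_bool (v = s) - of_bool (v = sv s))"
    unfolding net_flow_path_flow[OF \<open>finite E\<close> assms(4,5)] using sv by auto
  finally show ?thesis .
qed

lemma augment_within_capacity:
  assumes net: "skew_symmetric_network V E src trg sv se u s"
    and f: "is_IS_flow V E src trg sv se u s f"
    and reg: "regular_path se (res_cap u f) P" and "distinct P" and "a \<in> E"
  shows "0 \<le> augment se P f a \<and> augment se P f a \<le> real (u a)"
proof -
  have "of_bool ((a, b) \<in> set P) + of_bool (se_plus se (a, b) \<in> set P) \<le> res_cap u f (a, b)" for b
    by (rule regular_path_mate_count[OF reg]) (use res_cap_IS_flow[OF net f \<open>a \<in> E\<close>] in auto)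
  from this[of True] this[of False] have
    "of_bool ((a, True) \<in> set P) + of_bool ((se a, True) \<in> set P) \<le> real (u a) - f a"
    "of_bool ((a, False) \<in> set P) + of_bool ((se a, False) \<in> set P) \<le> f a"
    by (simp_all add: res_cap_def se_plus_def)
  moreover have "0 \<le> (of_bool b :: real)" for b
    by simp
  moreover have "augment se P f a = f a + of_bool ((a, True) \<in> set P) - of_bool ((a, False) \<in> set P)
      + of_bool ((se a, True) \<in> set P) - of_bool ((se a, False) \<in> set P)"
    using \<open>distinct P\<close> by (simp add: augment_def path_flow_def count_list_distinct)
  ultimately show ?thesis
    by (smt (verit))
qed

lemma augment_IS_flow:
  assumes net: "skew_symmetric_network V E src trg sv se u s"
    and f: "is_IS_flow V E src trg sv se u s f"
    and P: "r_augmenting_path E src trg sv se u s f P"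
  shows "is_IS_flow V E src trg sv se u s (augment se P f)"
    and "flow_value E src trg s (augment se P f) = flow_value E src trg s f + 2"
proof -
  have graph: "skew_symmetric_graph V E src trg sv se" and "s \<in> V"
    using net unfolding skew_symmetric_network_def by auto
  then have "sv s \<noteq> s" and se_se: "\<And>a. a \<in> E \<Longrightarrow> se (se a) = a"
    unfolding skew_symmetric_graph_def by auto
  have P_path: "set P \<subseteq> E \<times> UNIV" "walk (src_plus src trg) (trg_plus src trg) s P (sv s)"
      "distinct (s # map (trg_plus src trg) P)" and reg: "regular_path se (res_cap u f) P"
    using P unfolding r_augmenting_path_def is_path_plus_iff_walk by auto
  have "distinct P"
    using P_path(3) by (simp add: distinct_map)
  have f_IS: "\<And>a. a \<in> E \<Longrightarrow> f a \<in> \<int> \<and> f (se a) = f a"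
    and f_cons: "\<And>v. v \<in> V - {s, sv s} \<Longrightarrow> net_flow E src trg f v = 0"
    using f unfolding is_IS_flow_def is_flow_iff_net_flow symmetric_fun_def by auto
  have "augment se P f a \<in> \<int>" if "a \<in> E" for a
    using f_IS[OF that] by (simp add: augment_def path_flow_def)
  moreover have "augment se P f (se a) = augment se P f a" if "a \<in> E" for a
    using f_IS[OF that] se_se[OF that] by (simp add: augment_def)
  moreover have "net_flow E src trg (augment se P f) v = 0" if "v \<in> V - {s, sv s}" for v
    using f_cons[OF that] that net_flow_augment[OF graph \<open>s \<in> V\<close> _ P_path(1,2)] by simp
  ultimately show "is_IS_flow V E src trg sv se u s (augment se P f)"
    using augment_within_capacity[OF net f reg \<open>distinct P\<close>]
    unfolding is_IS_flow_def is_flow_iff_net_flow symmetric_fun_def by blast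
  show "flow_value E src trg s (augment se P f) = flow_value E src trg s f + 2"
    using net_flow_augment[OF graph \<open>s \<in> V\<close> \<open>s \<in> V\<close> P_path(1,2)] \<open>sv s \<noteq> s\<close>
    unfolding flow_value_eq_net_flow by simp
qed

section \<open>Regular paths from a flow of larger value\<close>

lemma card_copies:
  fixes h :: "'p \<Rightarrow> nat"
  assumes "finite F"
  shows "card {t \<in> (SIGMA p:F. {..<h p}). x (fst t) = v} = (\<Sum>p\<in>{p\<in>F. x p = v}. h p)"
proof -
  have "{t \<in> (SIGMA p:F. {..<h p}). x (fst t) = v} = (SIGMA p:{p\<in>F. x p = v}. {..<h p})"
    by auto
  then show ?thesis
    using assms by (simp add: card_SigmaI)
qed

lemma card_copies_net_flow:
  fixes h :: "'p \<Rightarrow> nat"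
  assumes "finite F"
  shows "real (card {t \<in> (SIGMA p:F. {..<h p}). sp (fst t) = v})
       - real (card {t \<in> (SIGMA p:F. {..<h p}). tp (fst t) = v}) = net_flow F sp tp (\<lambda>p. real (h p)) v"
  using assms by (simp add: card_copies net_flow_def)

(* The arc p of G^+ taken with multiplicity h p becomes the copies (p, i), i < h p; a copy and
   its mate carry the same index. *)
lemma skew_multigraph_copies:
  fixes h :: "'e \<times> bool \<Rightarrow> nat"
  assumes "skew_symmetric_graph V E src trg sv se"
    and "\<And>p. p \<in> E \<times> UNIV \<Longrightarrow> h (se_plus se p) = h p"
  shows "skew_multigraph (SIGMA p:E \<times> UNIV. {..<h p})
      (\<lambda>t. src_plus src trg (fst t)) (\<lambda>t. trg_plus src trg (fst t))
      (\<lambda>t. (se_plus se (fst t), snd t)) V sv"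
proof -
  have E: "finite E" "\<And>a. a \<in> E \<Longrightarrow> src a \<in> V \<and> trg a \<in> V"
    and se: "\<And>a. a \<in> E \<Longrightarrow> se a \<in> E \<and> se (se a) = a \<and> se a \<noteq> a
      \<and> src (se a) = sv (trg a) \<and> trg (se a) = sv (src a)"
    and sv: "\<And>x. x \<in> V \<Longrightarrow> sv x \<in> V \<and> sv (sv x) = x \<and> sv x \<noteq> x"
    using assms(1) unfolding skew_symmetric_graph_def by auto
  have h: "\<And>a b. a \<in> E \<Longrightarrow> h (se a, b) = h (a, b)"
    using assms(2) unfolding se_plus_def by auto
  show ?thesis
    by unfold_locales (auto simp: E se sv h se_plus_def src_plus_def trg_plus_def)
qed

(* g - f on G^+: forward arcs carry the increase, reverse arcs the decrease. *)
definition flow_difference :: "('e \<Rightarrow> real) \<Rightarrow> ('e \<Rightarrow> real) \<Rightarrow> 'e \<times> bool \<Rightarrow> nat" where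
  "flow_difference f g p = nat \<lfloor>if snd p then g (fst p) - f (fst p) else f (fst p) - g (fst p)\<rfloor>"

lemma flow_difference_int:
  assumes "f a \<in> \<int>" and "g a \<in> \<int>"
  obtains z where "g a - f a = of_int z"
    and "flow_difference f g (a, True) = nat z" and "flow_difference f g (a, False) = nat (- z)"
proof -
  from assms have "g a - f a \<in> \<int>"
    by simp
  then obtain z where z: "g a - f a = of_int z"
    by (rule Ints_cases)
  have "f a - g a = of_int (- z)"
    using z by simp
  then have "\<lfloor>g a - f a\<rfloor> = z" "\<lfloor>f a - g a\<rfloor> = - z"
    unfolding z by simp_all
  with z show ?thesis
    using that by (simp add: flow_difference_def)
qed

lemma flow_difference_forward_backward:
  assumes "f a \<in> \<int>" and "g a \<in> \<int>"
  shows "real (flow_difference f g (a, True)) - real (flow_difference f g (a, False)) = g a - f a"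
  using assms by (rule flow_difference_int) auto

lemma flow_difference_le_res_cap:
  assumes "f a \<in> \<int>" and "g a \<in> \<int>"
    and "0 \<le> f a" and "f a \<le> real (u a)" and "0 \<le> g a" and "g a \<le> real (u a)"
  shows "real (flow_difference f g (a, b)) \<le> res_cap u f (a, b)"
proof -
  obtain z where "g a - f a = of_int z" "flow_difference f g (a, True) = nat z"
    "flow_difference f g (a, False) = nat (- z)"
    using flow_difference_int[of f a g, OF assms(1,2)] by blast
  with assms(3-6) show ?thesis
    by (cases b; cases "0 \<le> z") (auto simp: res_cap_def)
qed

lemma net_flow_flow_difference:
  assumes "finite E" and "\<And>a. a \<in> E \<Longrightarrow> f a \<in> \<int> \<and> g a \<in> \<int>"
  shows "net_flow (E \<times> UNIV) (src_plus src trg) (trg_plus src trg) (\<lambda>p. real (flow_difference f g p)) v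
       = net_flow E src trg g v - net_flow E src trg f v"
proof -
  have "net_flow (E \<times> UNIV) (src_plus src trg) (trg_plus src trg) (\<lambda>p. real (flow_difference f g p)) v
      = net_flow E src trg (\<lambda>a. g a - f a) v"
    unfolding net_flow_plus[OF assms(1)] using assms(2)
    by (intro net_flow_cong) (simp add: flow_difference_forward_backward)
  then show ?thesis
    by (simp add: net_flow_diff)
qed

lemma regular_path_from_mate_free_trail:
  fixes h :: "'e \<times> bool \<Rightarrow> nat"
  assumes "s \<noteq> sv s"
    and h_mate: "\<And>p. p \<in> E \<times> UNIV \<Longrightarrow> h (se_plus se p) = h p"
    and cs: "cs \<noteq> []" "set cs \<subseteq> (SIGMA p:E \<times> UNIV. {..<h p})"
      "src_plus src trg (fst (hd cs)) = s" "trg_plus src trg (fst (last cs)) = sv s"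
      "successively (\<lambda>t t'. trg_plus src trg (fst t) = src_plus src trg (fst t')) cs"
    and mate_free: "\<And>t t'. t \<in> set cs \<Longrightarrow> t' \<in> set cs \<Longrightarrow> t \<noteq> (se_plus se (fst t'), snd t')"
  shows "\<exists>P. is_path_plus E src trg P s (sv s) \<and> regular_path se (\<lambda>p. real (h p)) P"
proof -
  have "walk (src_plus src trg) (trg_plus src trg) s (map fst cs) (sv s)"
    using cs by (simp add: walk_iff_successively successively_map hd_map last_map)
  then obtain P where P: "walk (src_plus src trg) (trg_plus src trg) s P (sv s)"
      "set P \<subseteq> fst ` set cs" "distinct (s # map (trg_plus src trg) P)"
    using walk_shortcut by (metis set_map)
  have copy: "\<exists>i. (p, i) \<in> set cs \<and> p \<in> E \<times> UNIV \<and> i < h p" if "p \<in> set P" for p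
  proof -
    obtain i where "(p, i) \<in> set cs"
      using \<open>p \<in> set P\<close> P(2) by force
    with cs(2) show ?thesis
      by blast
  qed
  have "P \<noteq> []"
    using P(1) \<open>s \<noteq> sv s\<close> by auto
  moreover have "set P \<subseteq> E \<times> UNIV"
    using copy by blast
  moreover have "h p \<ge> 2" if mates: "p \<in> set P" "se_plus se p \<in> set P" for p
  proof -
    obtain i j where ij: "(p, i) \<in> set cs" "(se_plus se p, j) \<in> set cs" "p \<in> E \<times> UNIV"
        "i < h p" "j < h (se_plus se p)"
      using copy[OF mates(1)] copy[OF mates(2)] by blast
    then have "j \<noteq> i"
      using mate_free[of "(se_plus se p, j)" "(p, i)"] by auto
    with ij show ?thesis
      using h_mate[OF ij(3)] by linarith
  qed
  moreover have "h p > 0" if "p \<in> set P" for p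
    using copy[OF that] by auto
  ultimately show ?thesis
    using P unfolding is_path_plus_iff_walk regular_path_def by auto
qed

lemma exists_r_augmenting_path:
  assumes net: "skew_symmetric_network V E src trg sv se u s"
    and f: "is_IS_flow V E src trg sv se u s f" and g: "is_IS_flow V E src trg sv se u s g"
    and larger: "flow_value E src trg s f < flow_value E src trg s g"
  shows "\<exists>P. r_augmenting_path E src trg sv se u s f P"
proof -
  have graph: "skew_symmetric_graph V E src trg sv se" and "s \<in> V"
    using net unfolding skew_symmetric_network_def by auto
  then have "finite E" "sv s \<noteq> s"
    unfolding skew_symmetric_graph_def by auto
  have f_IS: "\<And>a. a \<in> E \<Longrightarrow> f a \<in> \<int> \<and> f (se a) = f a \<and> 0 \<le> f a \<and> f a \<le> real (u a)"
    and f_cons: "\<And>v. v \<in> V - {s, sv s} \<Longrightarrow> net_flow E src trg f v = 0"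
    using f unfolding is_IS_flow_def is_flow_iff_net_flow symmetric_fun_def by auto
  have g_IS: "\<And>a. a \<in> E \<Longrightarrow> g a \<in> \<int> \<and> g (se a) = g a \<and> 0 \<le> g a \<and> g a \<le> real (u a)"
    and g_cons: "\<And>v. v \<in> V - {s, sv s} \<Longrightarrow> net_flow E src trg g v = 0"
    using g unfolding is_IS_flow_def is_flow_iff_net_flow symmetric_fun_def by auto
  define h where "h = flow_difference f g"
  have h_mate: "h (se_plus se p) = h p" if "p \<in> E \<times> UNIV" for p
    using that f_IS g_IS by (auto simp: h_def flow_difference_def se_plus_def)
  interpret copies: skew_multigraph "SIGMA p:E \<times> UNIV. {..<h p}"
    "\<lambda>t. src_plus src trg (fst t)" "\<lambda>t. trg_plus src trg (fst t)" "\<lambda>t. (se_plus se (fst t), snd t)" V sv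
    by (rule skew_multigraph_copies[OF graph]) (rule h_mate)
  have card_diff: "real (card (copies.arcs_out v)) - real (card (copies.arcs_in v))
      = net_flow E src trg g v - net_flow E src trg f v" for v
  proof -
    have "real (card (copies.arcs_out v)) - real (card (copies.arcs_in v))
        = net_flow (E \<times> UNIV) (src_plus src trg) (trg_plus src trg) (\<lambda>p. real (h p)) v"
      unfolding copies.arcs_out_def copies.arcs_in_def using \<open>finite E\<close> by (intro card_copies_net_flow) simp
    also have "\<dots> = net_flow E src trg g v - net_flow E src trg f v"
      unfolding h_def using f_IS g_IS by (intro net_flow_flow_difference \<open>finite E\<close>) auto
    finally show ?thesis .
  qed
  have "card (copies.arcs_in x) = card (copies.arcs_out x)" if "x \<in> V" "x \<noteq> s" "x \<noteq> sv s" for x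
    using card_diff[of x] f_cons g_cons that by simp
  moreover have "card (copies.arcs_in s) < card (copies.arcs_out s)"
    using card_diff[of s] larger unfolding flow_value_eq_net_flow by simp
  ultimately obtain cs where cs: "cs \<noteq> []" "set cs \<subseteq> (SIGMA p:E \<times> UNIV. {..<h p})"
      "src_plus src trg (fst (hd cs)) = s" "trg_plus src trg (fst (last cs)) = sv s"
      "successively (\<lambda>t t'. trg_plus src trg (fst t) = src_plus src trg (fst t')) cs"
      and mate_free: "\<forall>t\<in>set cs. \<forall>t'\<in>set cs. t \<noteq> (se_plus se (fst t'), snd t')"
    using copies.mate_free_trail[OF \<open>s \<in> V\<close>] by blast
  then obtain P where "is_path_plus E src trg P s (sv s)" and reg: "regular_path se (\<lambda>p. real (h p)) P"
    using regular_path_from_mate_free_trail[of s sv E h se cs src trg] \<open>sv s \<noteq> s\<close> h_mate by metis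
  moreover have "regular_path se (res_cap u f) P"
  proof (rule regular_path_mono[OF reg])
    fix p
    assume "p \<in> set P"
    then have "fst p \<in> E"
      using \<open>is_path_plus E src trg P s (sv s)\<close> by (auto simp: is_path_plus_def)
    then show "real (h p) \<le> res_cap u f p"
      using flow_difference_le_res_cap[of f "fst p" g u "snd p"] f_IS g_IS by (simp add: h_def)
  qed
  ultimately show ?thesis
    unfolding r_augmenting_path_def by blast
qed

theorem mainTheorem4:
  fixes V :: "'v set" and E :: "'e set" and src trg :: "'e \<Rightarrow> 'v"
    and sv :: "'v \<Rightarrow> 'v" and se :: "'e \<Rightarrow> 'e" and u :: "'e \<Rightarrow> nat" and s :: 'v
    and f :: "'e \<Rightarrow> real"
  assumes "skew_symmetric_network V E src trg sv se u s"
    and "is_IS_flow V E src trg sv se u s f"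
  shows "(\<forall>g. is_IS_flow V E src trg sv se u s g \<longrightarrow>
            flow_value E src trg s g \<le> flow_value E src trg s f)
         \<longleftrightarrow> \<not> (\<exists>P. r_augmenting_path E src trg sv se u s f P)"
proof
  assume "\<forall>g. is_IS_flow V E src trg sv se u s g \<longrightarrow>
            flow_value E src trg s g \<le> flow_value E src trg s f"
  then show "\<not> (\<exists>P. r_augmenting_path E src trg sv se u s f P)"
    using augment_IS_flow[OF assms] by fastforce
next
  assume "\<not> (\<exists>P. r_augmenting_path E src trg sv se u s f P)"
  then show "\<forall>g. is_IS_flow V E src trg sv se u s g \<longrightarrow>
            flow_value E src trg s g \<le> flow_value E src trg s f"
    using exists_r_augmenting_path[OF assms] by (meson not_le)
qed

end
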